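(* Let $\mathcal{Y}$ be sampled from $\operatorname{TBM}(\rho,\mathcal{S},z_1,\dots,z_d)$, fix a mode $k$, let $Y=\mathrm{mat}_k\mathcal{Y}$ and $X=\mathbb{E}Y$. Then $$\min_{i,j\in[n_k]:\,z_k(i)\ne z_k(j)}\|(XX^\top)_{i:}-(XX^\top)_{j:}\|\ \ge\ \frac{\prod_{k'=1}^d\alpha_{k'}}{\sqrt{2\alpha_k}}\,\frac{\delta_k^2}{\sqrt{n_kr_k}}\,n_1\cdots n_d\,\rho^2,$$ where $\delta_k$ is the mode-$k$ cluster separation and $\alpha_{k'}$ the mode-$k'$ cluster balance coefficients.
   Context: Tensor block model: $\operatorname{TBM}(\rho,\mathcal{S},z_1,\dots,z_d)$ with dimensions $n_1,\dots,n_d$ and cluster counts $r_1,\dots,r_d$ is the law of a random tensor $\mathcal{Y}\in\mathbb{Z}^{n_1\times\cdots\times n_d}$ with independent entries and $\mathbb{E}\mathcal{Y}_{i_1\dots i_d}=\rho\,\mathcal{S}_{z_1(i_1)\dots z_d(i_d)}$, where $\rho\ge0$, $\mathcal{S}\in[-1,1]^{r_1\times\cdots\times r_d}$, $z_j\in[r_j]^{n_j}$. Matricization: $\mathrm{mat}_k(\mathcal{A})\in\mathbb{R}^{n_k\times(n_1\cdots n_d/n_k)}$ has rows indexed by $i_k$ and columns by the remaining indices in lexicographic order, with entries $\mathcal{A}_{i_1\dots i_d}$. Mode-$k$ cluster separation: $\delta_k=\min_{l\ne l'}\|(\mathrm{mat}_k\mathcal{S})_{l:}-(\mathrm{mat}_k\mathcal{S})_{l':}\|/\sqrt{r_1\cdots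 r_d/r_k}$. Mode-$j$ cluster balance coefficient: $\alpha_j=\min_{l\in[r_j]}|z_j^{-1}\{l\}|/(n_j/r_j)$. Norms are Euclidean. *)

theory Defs
  imports "HOL-Probability.Probability"
begin

text \<open>Conventions: modes are 0,...,d-1; indices of mode j are 0,...,n j - 1;
  clusters of mode j are 0,...,r j - 1.  A (multi-)index of a d-tensor is a function
  nat \<Rightarrow> nat in PiE {..<d} (\<lambda>j. {..<n j}).\<close>

definition tidx :: "nat \<Rightarrow> (nat \<Rightarrow> nat) \<Rightarrow> (nat \<Rightarrow> nat) set" where
  "tidx d n = PiE {..<d} (\<lambda>j. {..<n j})"

text \<open>Column indices of the mode-k matricization: the multi-indices over the remaining modes.
  The norms used below do not depend on the order of the columns.\<close>
definition colidx :: "nat \<Rightarrow> (nat \<Rightarrow> nat) \<Rightarrow> nat \<Rightarrow> (nat \<Rightarrow> nat) set" where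
  "colidx d n k = PiE ({..<d} - {k}) (\<lambda>j. {..<n j})"

text \<open>Entry (i, c) of mat_k A, where c is a column multi-index.\<close>
definition matk :: "nat \<Rightarrow> ((nat \<Rightarrow> nat) \<Rightarrow> real) \<Rightarrow> nat \<Rightarrow> (nat \<Rightarrow> nat) \<Rightarrow> real" where
  "matk k A i c = A (c(k := i))"

definition gramk :: "nat \<Rightarrow> (nat \<Rightarrow> nat) \<Rightarrow> nat \<Rightarrow> ((nat \<Rightarrow> nat) \<Rightarrow> real) \<Rightarrow> nat \<Rightarrow> nat \<Rightarrow> real" where
  "gramk d n k A i i' = (\<Sum>c\<in>colidx d n k. matk k A i c * matk k A i' c)"

definition gram_row_dist :: "nat \<Rightarrow> (nat \<Rightarrow> nat) \<Rightarrow> nat \<Rightarrow> ((nat \<Rightarrow> nat) \<Rightarrow> real) \<Rightarrow> nat \<Rightarrow> nat \<Rightarrow> real" where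
  "gram_row_dist d n k A i j = sqrt (\<Sum>i'<n k. (gramk d n k A i i' - gramk d n k A j i')\<^sup>2)"

definition tbm_mean :: "nat \<Rightarrow> real \<Rightarrow> ((nat \<Rightarrow> nat) \<Rightarrow> real) \<Rightarrow> (nat \<Rightarrow> nat \<Rightarrow> nat) \<Rightarrow> (nat \<Rightarrow> nat) \<Rightarrow> real" where
  "tbm_mean d \<rho> S z idx = \<rho> * S (\<lambda>j\<in>{..<d}. z j (idx j))"

definition tbm_params :: "nat \<Rightarrow> (nat \<Rightarrow> nat) \<Rightarrow> (nat \<Rightarrow> nat) \<Rightarrow> real \<Rightarrow> ((nat \<Rightarrow> nat) \<Rightarrow> real)
    \<Rightarrow> (nat \<Rightarrow> nat \<Rightarrow> nat) \<Rightarrow> bool" where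
  "tbm_params d n r \<rho> S z \<longleftrightarrow> \<rho> \<ge> 0
     \<and> (\<forall>c\<in>tidx d r. \<bar>S c\<bar> \<le> 1)
     \<and> (\<forall>j<d. \<forall>i<n j. z j i < r j)"

definition is_TBM :: "'a measure \<Rightarrow> ('a \<Rightarrow> (nat \<Rightarrow> nat) \<Rightarrow> int) \<Rightarrow> nat \<Rightarrow> (nat \<Rightarrow> nat) \<Rightarrow> (nat \<Rightarrow> nat)
    \<Rightarrow> real \<Rightarrow> ((nat \<Rightarrow> nat) \<Rightarrow> real) \<Rightarrow> (nat \<Rightarrow> nat \<Rightarrow> nat) \<Rightarrow> bool" where
  "is_TBM M Y d n r \<rho> S z \<longleftrightarrow> prob_space M \<and> tbm_params d n r \<rho> S z
     \<and> prob_space.indep_vars M (\<lambda>_. count_space UNIV) (\<lambda>idx \<omega>. Y \<omega> idx) (tidx d n)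
     \<and> (\<forall>idx\<in>tidx d n. integrable M (\<lambda>\<omega>. real_of_int (Y \<omega> idx))
          \<and> prob_space.expectation M (\<lambda>\<omega>. real_of_int (Y \<omega> idx)) = tbm_mean d \<rho> S z idx)"

definition sep :: "nat \<Rightarrow> (nat \<Rightarrow> nat) \<Rightarrow> nat \<Rightarrow> ((nat \<Rightarrow> nat) \<Rightarrow> real) \<Rightarrow> real" where
  "sep d r k S = Min {sqrt (\<Sum>c\<in>colidx d r k. (matk k S l c - matk k S l' c)\<^sup>2)
                        / sqrt (real (\<Prod>j\<in>{..<d} - {k}. r j))
                      | l l'. l < r k \<and> l' < r k \<and> l \<noteq> l'}"

definition balance :: "(nat \<Rightarrow> nat) \<Rightarrow> (nat \<Rightarrow> nat) \<Rightarrow> (nat \<Rightarrow> nat \<Rightarrow> nat) \<Rightarrow> nat \<Rightarrow> real" where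
  "balance n r z j = real (Min {card {i. i < n j \<and> z j i = l} | l. l < r j}) / (real (n j) / real (r j))"

end

theory Submission
  imports Defs
begin

text \<open>The mean tensor is constant on blocks, so the Gram matrix of its mode-k matricization
  has entries rho^2 K(z_k(i), z_k(i')), where K is the Gram matrix of the cluster rows of mat_k S,
  each column of mat_k S repeated once for every column of the data mapped to it.
  Comparing rows i and j (clusters a \<noteq> b) only at the columns i' lying in cluster a or b,
  each of size at least m_k (m_j is the smallest mode-j cluster size), bounds the squared
  row distance below by
  m_k ((K_aa - K_ab)^2 + (K_ab - K_bb)^2) \<ge> m_k (K_aa - 2 K_ab + K_bb)^2 / 2, and
  K_aa - 2 K_ab + K_bb is the squared distance of the repeated rows a and b of mat_k S.
  Since every column is repeated at least prod_{j \<noteq> k} m_j times, that distance is at least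
  prod_{j \<noteq> k} m_j r_j * delta_k^2. Writing alpha_j = m_j r_j / n_j gives the stated bound.\<close>

lemma sum_comp_ge_fibre_card:
  fixes g :: "'b \<Rightarrow> real"
  assumes "finite A" "finite B" "f ` A \<subseteq> B"
    and "\<And>b. b \<in> B \<Longrightarrow> m \<le> card {x \<in> A. f x = b}"
    and "\<And>b. b \<in> B \<Longrightarrow> 0 \<le> g b"
  shows "real m * sum g B \<le> (\<Sum>x\<in>A. g (f x))"
proof -
  have "(\<Sum>x\<in>A. g (f x)) = (\<Sum>b\<in>B. \<Sum>x\<in>{x \<in> A. f x = b}. g (f x))"
    by (rule sum.group[symmetric, OF assms(1-3)])
  also have "\<dots> = (\<Sum>b\<in>B. real (card {x \<in> A. f x = b}) * g b)"
    by (intro sum.cong) auto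
  also have "\<dots> \<ge> (\<Sum>b\<in>B. real m * g b)"
    by (intro sum_mono mult_right_mono) (auto simp: assms(4,5))
  finally show ?thesis by (simp add: sum_distrib_left)
qed

lemma card_PiE_restrict_fibre:
  assumes "finite A" "\<beta> \<in> extensional A"
  shows "card {c \<in> PiE A N. (\<lambda>j\<in>A. f j (c j)) = \<beta>} = (\<Prod>j\<in>A. card {i \<in> N j. f j i = \<beta> j})"
proof -
  have "{c \<in> PiE A N. (\<lambda>j\<in>A. f j (c j)) = \<beta>} = PiE A (\<lambda>j. {i \<in> N j. f j i = \<beta> j})"
    using assms(2) by (auto simp: PiE_iff extensional_def fun_eq_iff)
  then show ?thesis
    using card_PiE[OF assms(1)] by simp
qed

lemma sum_sq_diff_two_clusters_ge:
  fixes K :: "'c \<Rightarrow> 'c \<Rightarrow> real"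
  assumes "finite I" "a \<noteq> b" "K a b = K b a"
    and "m \<le> card {i \<in> I. z i = a}" "m \<le> card {i \<in> I. z i = b}"
  shows "real m / 2 * (K a a - 2 * K a b + K b b)\<^sup>2 \<le> (\<Sum>i\<in>I. (K a (z i) - K b (z i))\<^sup>2)"
proof -
  define x where "x = K a a - K b a"
  define y where "y = K a b - K b b"
  let ?Ia = "{i \<in> I. z i = a}" and ?Ib = "{i \<in> I. z i = b}"
  have "real m * (x\<^sup>2 + y\<^sup>2) \<le> real (card ?Ia) * x\<^sup>2 + real (card ?Ib) * y\<^sup>2"
    using assms(4,5) by (simp add: distrib_left add_mono mult_right_mono)
  also have "\<dots> = (\<Sum>i\<in>?Ia \<union> ?Ib. (K a (z i) - K b (z i))\<^sup>2)"
    using assms(1,2) by (subst sum.union_disjoint) (auto simp: x_def y_def)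
  also have "\<dots> \<le> (\<Sum>i\<in>I. (K a (z i) - K b (z i))\<^sup>2)"
    using assms(1) by (intro sum_mono2) auto
  finally have sum_ge: "real m * (x\<^sup>2 + y\<^sup>2) \<le> (\<Sum>i\<in>I. (K a (z i) - K b (z i))\<^sup>2)" .
  moreover have "(x - y)\<^sup>2 / 2 \<le> x\<^sup>2 + y\<^sup>2"
    using zero_le_power2[of "x + y"] by (simp add: power2_eq_square algebra_simps)
  moreover have "x - y = K a a - 2 * K a b + K b b"
    using assms(3) by (simp add: x_def y_def)
  ultimately have "real m * ((K a a - 2 * K a b + K b b)\<^sup>2 / 2) \<le> real m * (x\<^sup>2 + y\<^sup>2)"
    by (intro mult_left_mono) auto
  with sum_ge show ?thesis
    by simp
qed

definition min_cluster_size :: "(nat \<Rightarrow> nat) \<Rightarrow> (nat \<Rightarrow> nat) \<Rightarrow> (nat \<Rightarrow> nat \<Rightarrow> nat) \<Rightarrow> nat \<Rightarrow> nat" where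
  "min_cluster_size n r z j = Min {card {i. i < n j \<and> z j i = l} | l. l < r j}"

lemma min_cluster_size_le:
  assumes "l < r j"
  shows "min_cluster_size n r z j \<le> card {i. i < n j \<and> z j i = l}"
  unfolding min_cluster_size_def by (rule Min_le) (use assms in auto)

lemma balance_eq_min_cluster_size:
  "balance n r z j = real (min_cluster_size n r z j) * real (r j) / real (n j)"
  unfolding balance_def min_cluster_size_def by simp

definition cluster_col :: "nat \<Rightarrow> nat \<Rightarrow> (nat \<Rightarrow> nat \<Rightarrow> nat) \<Rightarrow> (nat \<Rightarrow> nat) \<Rightarrow> nat \<Rightarrow> nat" where
  "cluster_col d k z c = (\<lambda>j\<in>{..<d} - {k}. z j (c j))"

definition cluster_gram :: "nat \<Rightarrow> (nat \<Rightarrow> nat) \<Rightarrow> nat \<Rightarrow> (nat \<Rightarrow> nat \<Rightarrow> nat) \<Rightarrow> ((nat \<Rightarrow> nat) \<Rightarrow> real)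
    \<Rightarrow> nat \<Rightarrow> nat \<Rightarrow> real" where
  "cluster_gram d n k z S a b =
     (\<Sum>c\<in>colidx d n k. matk k S a (cluster_col d k z c) * matk k S b (cluster_col d k z c))"

lemma matk_tbm_mean:
  assumes "k < d"
  shows "matk k (tbm_mean d \<rho> S z) i c = \<rho> * matk k S (z k i) (cluster_col d k z c)"
proof -
  have "(\<lambda>j\<in>{..<d}. z j ((c(k := i)) j)) = (cluster_col d k z c)(k := z k i)"
    using assms by (auto simp: cluster_col_def fun_eq_iff)
  then show ?thesis
    by (simp add: matk_def tbm_mean_def)
qed

lemma gramk_tbm_mean:
  assumes "k < d"
  shows "gramk d n k (tbm_mean d \<rho> S z) i i' = \<rho>\<^sup>2 * cluster_gram d n k z S (z k i) (z k i')"
  by (simp add: gramk_def cluster_gram_def matk_tbm_mean[OF assms] sum_distrib_left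
      power2_eq_square mult_ac)

lemma cluster_gram_gap:
  "cluster_gram d n k z S a a - 2 * cluster_gram d n k z S a b + cluster_gram d n k z S b b =
     (\<Sum>c\<in>colidx d n k. (matk k S a (cluster_col d k z c) - matk k S b (cluster_col d k z c))\<^sup>2)"
  by (simp add: cluster_gram_def power2_eq_square algebra_simps sum.distrib sum_subtractf
      sum_distrib_left)

lemma fun_upd_colidx_in_tidx:
  assumes "k < d" "c \<in> colidx d n k" "i < n k"
  shows "c(k := i) \<in> tidx d n"
  using assms by (auto simp: tidx_def colidx_def PiE_iff extensional_def)

lemma gram_row_dist_cong:
  assumes "k < d" "i < n k" "j < n k" "\<And>idx. idx \<in> tidx d n \<Longrightarrow> A idx = B idx"
  shows "gram_row_dist d n k A i j = gram_row_dist d n k B i j"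
proof -
  have "gramk d n k A i1 i2 = gramk d n k B i1 i2" if "i1 < n k" "i2 < n k" for i1 i2
    unfolding gramk_def matk_def
    using that assms(1,4) fun_upd_colidx_in_tidx by (intro sum.cong) auto
  then show ?thesis
    using assms(2,3) by (simp add: gram_row_dist_def)
qed

lemma gram_row_dist_tbm_mean_ge:
  assumes "k < d" "i < n k" "j < n k" "z k i \<noteq> z k j" "\<forall>i'<n k. z k i' < r k"
  shows "\<rho>\<^sup>2 * sqrt (real (min_cluster_size n r z k) / 2)
           * (\<Sum>c\<in>colidx d n k. (matk k S (z k i) (cluster_col d k z c)
                                   - matk k S (z k j) (cluster_col d k z c))\<^sup>2)
         \<le> gram_row_dist d n k (tbm_mean d \<rho> S z) i j"
proof -
  let ?K = "cluster_gram d n k z S" and ?m = "min_cluster_size n r z k"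
  let ?a = "z k i" and ?b = "z k j"
  define gap where "gap = (\<Sum>c\<in>colidx d n k. (matk k S ?a (cluster_col d k z c)
                                                - matk k S ?b (cluster_col d k z c))\<^sup>2)"
  define Q where "Q = (\<Sum>i'<n k. (?K ?a (z k i') - ?K ?b (z k i'))\<^sup>2)"
  have "real ?m / 2 * gap\<^sup>2 \<le> Q"
    unfolding Q_def gap_def cluster_gram_gap[symmetric]
  proof (rule sum_sq_diff_two_clusters_ge)
    show "?K ?a ?b = ?K ?b ?a"
      by (simp add: cluster_gram_def mult.commute)
    show "?m \<le> card {i' \<in> {..<n k}. z k i' = ?a}" "?m \<le> card {i' \<in> {..<n k}. z k i' = ?b}"
      using min_cluster_size_le assms(2,3,5) by auto
  qed (use assms(4) in auto)
  moreover have "gap \<ge> 0"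
    unfolding gap_def by (intro sum_nonneg) auto
  ultimately have "sqrt (real ?m / 2) * gap \<le> sqrt Q"
    by (metis abs_of_nonneg real_sqrt_abs real_sqrt_le_mono real_sqrt_mult)
  moreover have "sqrt (\<rho> ^ 4) = \<rho>\<^sup>2"
    using real_sqrt_abs[of "\<rho>\<^sup>2"] by (simp flip: power_mult)
  then have "gram_row_dist d n k (tbm_mean d \<rho> S z) i j = \<rho>\<^sup>2 * sqrt Q"
    by (simp add: gram_row_dist_def gramk_tbm_mean[OF assms(1)] Q_def power_mult_distrib
        right_diff_distrib[symmetric] sum_distrib_left[symmetric] real_sqrt_mult)
  ultimately show ?thesis
    unfolding gap_def by (simp add: mult.assoc mult_left_mono)
qed

lemma sum_cluster_col_ge:
  assumes "\<forall>j\<in>{..<d} - {k}. \<forall>i<n j. z j i < r j" "\<And>\<beta>. \<beta> \<in> colidx d r k \<Longrightarrow> 0 \<le> g \<beta>"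
  shows "real (\<Prod>j\<in>{..<d} - {k}. min_cluster_size n r z j) * (\<Sum>\<beta>\<in>colidx d r k. g \<beta>)
           \<le> (\<Sum>c\<in>colidx d n k. g (cluster_col d k z c))"
proof (rule sum_comp_ge_fibre_card)
  show "finite (colidx d n k)" "finite (colidx d r k)"
    by (auto simp: colidx_def intro!: finite_PiE)
  show "cluster_col d k z ` colidx d n k \<subseteq> colidx d r k"
    using assms(1) by (fastforce simp: cluster_col_def colidx_def PiE_iff)
  fix \<beta> assume \<beta>: "\<beta> \<in> colidx d r k"
  then have "card {c \<in> colidx d n k. cluster_col d k z c = \<beta>}
             = (\<Prod>j\<in>{..<d} - {k}. card {i. i < n j \<and> z j i = \<beta> j})"
    unfolding colidx_def cluster_col_def
    by (subst card_PiE_restrict_fibre) (auto simp: PiE_iff)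
  moreover have "(\<Prod>j\<in>{..<d} - {k}. min_cluster_size n r z j)
                 \<le> (\<Prod>j\<in>{..<d} - {k}. card {i. i < n j \<and> z j i = \<beta> j})"
    using \<beta> by (intro prod_mono) (auto simp: colidx_def PiE_iff min_cluster_size_le)
  ultimately show "(\<Prod>j\<in>{..<d} - {k}. min_cluster_size n r z j)
                   \<le> card {c \<in> colidx d n k. cluster_col d k z c = \<beta>}"
    by simp
qed (use assms(2) in auto)

text \<open>No positivity of r is needed: if some r_j (j \<noteq> k) vanishes, every quotient in sep
  divides by zero, so sep is 0.\<close>

lemma sep_sq_mult_le:
  assumes "a < r k" "b < r k" "a \<noteq> b"
  shows "(sep d r k S)\<^sup>2 * real (\<Prod>j\<in>{..<d} - {k}. r j)
           \<le> (\<Sum>c\<in>colidx d r k. (matk k S a c - matk k S b c)\<^sup>2)"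
proof -
  define R where "R = real (\<Prod>j\<in>{..<d} - {k}. r j)"
  define E where "E l l' = (\<Sum>c\<in>colidx d r k. (matk k S l c - matk k S l' c)\<^sup>2)" for l l'
  define F where "F = {sqrt (E l l') / sqrt R | l l'. l < r k \<and> l' < r k \<and> l \<noteq> l'}"
  have R_nonneg: "0 \<le> R" and E_nonneg: "0 \<le> E l l'" for l l'
    by (simp_all add: R_def E_def sum_nonneg prod_nonneg)
  have sep_F: "sep d r k S = Min F"
    by (simp add: sep_def F_def E_def R_def)
  have "F \<subseteq> (\<lambda>(l, l'). sqrt (E l l') / sqrt R) ` ({..<r k} \<times> {..<r k})"
    unfolding F_def by auto
  then have "finite F"
    by (rule finite_subset) auto
  moreover have "sqrt (E a b) / sqrt R \<in> F"
    unfolding F_def using assms by blast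
  moreover have "0 \<le> x" if "x \<in> F" for x
    using that R_nonneg E_nonneg unfolding F_def by auto
  ultimately have "0 \<le> sep d r k S" "sep d r k S \<le> sqrt (E a b) / sqrt R"
    unfolding sep_F using Min_in[of F] Min_le[of F] by blast+
  then have "(sep d r k S)\<^sup>2 \<le> (sqrt (E a b) / sqrt R)\<^sup>2"
    by (intro power_mono)
  also have "\<dots> = E a b / R"
    using R_nonneg E_nonneg by (simp add: power_divide)
  finally have "(sep d r k S)\<^sup>2 * R \<le> E a b"
    using R_nonneg E_nonneg by (cases "R = 0") (simp_all add: pos_divide_le_eq pos_le_divide_eq)
  then show ?thesis
    by (simp add: R_def E_def)
qed

lemma cluster_col_gap_ge_sep:
  assumes "\<forall>j\<in>{..<d} - {k}. \<forall>i<n j. z j i < r j" "a < r k" "b < r k" "a \<noteq> b"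
  shows "real (\<Prod>j\<in>{..<d} - {k}. min_cluster_size n r z j * r j) * (sep d r k S)\<^sup>2
           \<le> (\<Sum>c\<in>colidx d n k. (matk k S a (cluster_col d k z c) - matk k S b (cluster_col d k z c))\<^sup>2)"
proof -
  let ?P = "real (\<Prod>j\<in>{..<d} - {k}. min_cluster_size n r z j)"
  have "?P * ((sep d r k S)\<^sup>2 * real (\<Prod>j\<in>{..<d} - {k}. r j))
        \<le> ?P * (\<Sum>\<beta>\<in>colidx d r k. (matk k S a \<beta> - matk k S b \<beta>)\<^sup>2)"
    using assms(2-4) by (intro mult_left_mono sep_sq_mult_le) (auto simp: prod_nonneg)
  also have "\<dots> \<le> (\<Sum>c\<in>colidx d n k. (matk k S a (cluster_col d k z c) - matk k S b (cluster_col d k z c))\<^sup>2)"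
    using assms(1) by (intro sum_cluster_col_ge) auto
  finally show ?thesis
    by (simp add: prod.distrib mult_ac)
qed

lemma balance_factor_eq:
  assumes "\<forall>j<d. n j > 0 \<and> r j > 0" "k < d"
  shows "(\<Prod>k'<d. balance n r z k') / sqrt (2 * balance n r z k) / sqrt (real (n k) * real (r k))
           * real (\<Prod>j<d. n j)
         = sqrt (real (min_cluster_size n r z k) / 2)
           * real (\<Prod>j\<in>{..<d} - {k}. min_cluster_size n r z j * r j)"
proof -
  let ?m = "min_cluster_size n r z" and ?P = "real (\<Prod>j\<in>{..<d} - {k}. min_cluster_size n r z j * r j)"
  have nk: "real (n k) > 0" and rk: "real (r k) > 0"
    using assms by auto
  have "(\<Prod>k'<d. balance n r z k') * real (\<Prod>j<d. n j) = (\<Prod>j<d. balance n r z j * real (n j))"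
    by (simp add: prod.distrib)
  also have "\<dots> = (\<Prod>j<d. real (?m j * r j))"
    using assms(1) by (intro prod.cong) (auto simp: balance_eq_min_cluster_size)
  also have "\<dots> = real (?m k) * real (r k) * ?P"
    using assms(2) by (simp add: prod.remove[of "{..<d}" k])
  finally have numerator: "(\<Prod>k'<d. balance n r z k') * real (\<Prod>j<d. n j) = real (?m k) * real (r k) * ?P" .
  have "sqrt (2 * balance n r z k) * sqrt (real (n k) * real (r k))
        = sqrt ((real (r k))\<^sup>2 * (2 * real (?m k)))"
    using nk by (simp add: real_sqrt_mult[symmetric] balance_eq_min_cluster_size field_simps power2_eq_square)
  also have "\<dots> = real (r k) * sqrt (2 * real (?m k))"
    by (simp add: real_sqrt_mult)
  finally have denominator: "sqrt (2 * balance n r z k) * sqrt (real (n k) * real (r k))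
                             = real (r k) * sqrt (2 * real (?m k))" .
  have half: "real (?m k) / sqrt (2 * real (?m k)) = sqrt (real (?m k) / 2)"
    by (cases "?m k = 0") (simp_all add: real_sqrt_mult real_sqrt_divide field_simps)
  have "(\<Prod>k'<d. balance n r z k') / sqrt (2 * balance n r z k) / sqrt (real (n k) * real (r k))
          * real (\<Prod>j<d. n j)
        = (\<Prod>k'<d. balance n r z k') * real (\<Prod>j<d. n j)
          / (sqrt (2 * balance n r z k) * sqrt (real (n k) * real (r k)))"
    by simp
  also have "\<dots> = real (?m k) / sqrt (2 * real (?m k)) * ?P"
    unfolding numerator denominator using rk by simp
  finally show ?thesis
    unfolding half .
qed

theorem lemma6p2:
  fixes M :: "'a measure" and Y :: "'a \<Rightarrow> (nat \<Rightarrow> nat) \<Rightarrow> int"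
    and d :: nat and n r :: "nat \<Rightarrow> nat" and \<rho> :: real
    and S :: "(nat \<Rightarrow> nat) \<Rightarrow> real" and z :: "nat \<Rightarrow> nat \<Rightarrow> nat" and k :: nat
  assumes "is_TBM M Y d n r \<rho> S z"
    and "\<forall>j<d. n j > 0 \<and> r j > 0"
    and "k < d"
  defines "X \<equiv> (\<lambda>idx. prob_space.expectation M (\<lambda>\<omega>. real_of_int (Y \<omega> idx)))"
  shows "\<forall>i<n k. \<forall>j<n k. z k i \<noteq> z k j \<longrightarrow>
           gram_row_dist d n k X i j \<ge>
             (\<Prod>k'<d. balance n r z k') / sqrt (2 * balance n r z k)
             * (sep d r k S)\<^sup>2 / sqrt (real (n k) * real (r k))
             * real (\<Prod>j<d. n j) * \<rho>\<^sup>2"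
proof (intro allI impI)
  fix i j assume i: "i < n k" and j: "j < n k" and z_ij: "z k i \<noteq> z k j"
  let ?T = "matk k S" and ?col = "cluster_col d k z" and ?m = "min_cluster_size n r z"
  let ?A = "{..<d} - {k}" and ?\<delta> = "sep d r k S"
  have X_mean: "\<And>idx. idx \<in> tidx d n \<Longrightarrow> X idx = tbm_mean d \<rho> S z idx"
    and z_lt: "\<forall>j'<d. \<forall>i'<n j'. z j' i' < r j'"
    using assms(1) unfolding is_TBM_def tbm_params_def X_def by auto
  define gap where "gap = (\<Sum>c\<in>colidx d n k. (?T (z k i) (?col c) - ?T (z k j) (?col c))\<^sup>2)"
  have "\<rho>\<^sup>2 * sqrt (real (?m k) / 2) * gap \<le> gram_row_dist d n k (tbm_mean d \<rho> S z) i j"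
    unfolding gap_def using assms(3) i j z_ij z_lt by (intro gram_row_dist_tbm_mean_ge) auto
  also have "\<dots> = gram_row_dist d n k X i j"
    using assms(3) i j X_mean by (intro gram_row_dist_cong) auto
  finally have dist_ge: "\<rho>\<^sup>2 * sqrt (real (?m k) / 2) * gap \<le> gram_row_dist d n k X i j" .
  have gap_ge: "real (\<Prod>j\<in>?A. ?m j * r j) * ?\<delta>\<^sup>2 \<le> gap"
    unfolding gap_def using z_lt assms(3) i j z_ij by (intro cluster_col_gap_ge_sep) auto
  have "(\<Prod>k'<d. balance n r z k') / sqrt (2 * balance n r z k) * ?\<delta>\<^sup>2
          / sqrt (real (n k) * real (r k)) * real (\<Prod>j<d. n j) * \<rho>\<^sup>2
        = (\<Prod>k'<d. balance n r z k') / sqrt (2 * balance n r z k) / sqrt (real (n k) * real (r k))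
          * real (\<Prod>j<d. n j) * ?\<delta>\<^sup>2 * \<rho>\<^sup>2"
    by (simp add: divide_inverse mult_ac)
  also have "\<dots> = \<rho>\<^sup>2 * sqrt (real (?m k) / 2) * (real (\<Prod>j\<in>?A. ?m j * r j) * ?\<delta>\<^sup>2)"
    unfolding balance_factor_eq[OF assms(2,3)] by (simp only: mult_ac)
  also have "\<dots> \<le> \<rho>\<^sup>2 * sqrt (real (?m k) / 2) * gap"
    using gap_ge by (intro mult_left_mono) auto
  finally show "gram_row_dist d n k X i j \<ge>
      (\<Prod>k'<d. balance n r z k') / sqrt (2 * balance n r z k) * ?\<delta>\<^sup>2
        / sqrt (real (n k) * real (r k)) * real (\<Prod>j<d. n j) * \<rho>\<^sup>2"
    using dist_ge by linarith
qed

end
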